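(* Let $\gamma>0$, $s>0$, $u\ge\gamma$ and $v\in\mathbb{R}$. Let $G(u,v;s)=(u^2+v^2)^{-s}$ and $D_1=\partial/\partial u$. Then for $j\ge1$, $$\frac{D_1^jG(u,v;s)}{G(u,v;s)}=\frac{P_j(u,v;s)}{(u^2+v^2)^j},$$ where $P_j$ are the polynomials defined by $P_1(u,v;s)=-2su$ and $P_{m+1}(u,v;s)=(u^2+v^2)\frac{\partial P_m}{\partial u}(u,v;s)-2(s+m)uP_m(u,v;s)$; and $$-\frac{2s}{\gamma}\le\frac{D_1G}{G}<0,\qquad -\frac{s}{4\gamma^2(s+1)}\le\frac{D_1^2G}{G}\le\frac{2s(2s+1)}{\gamma^2},$$ $$-\frac{2s(2s+1)(2s+2)}{\gamma^3}\le\frac{D_1^3G}{G}\le\frac{2s(2s+2)}{\gamma^3(s+2)^2},$$ $$-\frac{2s(s+1)(2s+2)\cdot3}{\gamma^4}\le\frac{D_1^4G}{G}\le\frac{2s(2s+1)(2s+2)(2s+3)}{\gamma^4},$$ where all quotients are evaluated at $(u,v;s)$. *)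

theory Defs
  imports "HOL-Analysis.Analysis"
begin

definition G :: "real \<Rightarrow> real \<Rightarrow> real \<Rightarrow> real" where
  "G u v s = (u\<^sup>2 + v\<^sup>2) powr (-s)"

text \<open>The polynomials P_j (j \<ge> 1); P 0 is an unused convention (P_0 = 1).
  P_{m+1} = (u^2+v^2) dP_m/du - 2 (s+m) u P_m.\<close>
fun P :: "nat \<Rightarrow> real \<Rightarrow> real \<Rightarrow> real \<Rightarrow> real" where
  "P 0 u v s = 1"
| "P (Suc 0) u v s = - 2 * s * u"
| "P (Suc (Suc m)) u v s =
     (u\<^sup>2 + v\<^sup>2) * deriv (\<lambda>x. P (Suc m) x v s) u - 2 * (s + real (Suc m)) * u * P (Suc m) u v s"

definition D1G :: "nat \<Rightarrow> real \<Rightarrow> real \<Rightarrow> real \<Rightarrow> real" where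
  "D1G j u v s = (deriv ^^ j) (\<lambda>x. G x v s) u"

end

theory Submission
  imports Defs "HOL-Computational_Algebra.Polynomial"
begin

text \<open>By induction on j, with the product and chain rules,
  D_1^j G = (u^2+v^2)^{-s-j} P_j, which is exactly how the recursion for P_j arises.
  For j \<le> 4 the quotient u^j P_j / (u^2+v^2)^j is a rational function of v^2/u^2 \<ge> 0,
  and its bounds follow from explicit sum-of-squares certificates (an AM-GM inequality
  for the upper bound at j = 3). The resulting bounds in u only get weaker as u
  decreases to \<gamma>.\<close>

lemma P_Suc:
  "P (Suc j) u v s = (u\<^sup>2 + v\<^sup>2) * deriv (\<lambda>x. P j x v s) u - 2 * (s + real j) * u * P j u v s"
  by (cases j) auto

lemma P_eq_poly: "\<exists>p. \<forall>x. P j x v s = poly p x"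
proof (induction j)
  case 0
  show ?case by (intro exI[of _ "[:1:]"]) simp
next
  case (Suc j)
  then obtain p where p: "(\<lambda>x. P j x v s) = poly p" by blast
  then have p': "P j x v s = poly p x" for x
    by (rule fun_cong)
  have "deriv (\<lambda>x. P j x v s) x = poly (pderiv p) x" for x
    unfolding p by (rule DERIV_imp_deriv) (rule poly_DERIV)
  then show ?case
    by (intro exI[of _ "[:v\<^sup>2, 0, 1:] * pderiv p - smult (2 * (s + real j)) ([:0, 1:] * p)"])
       (simp add: P_Suc p' power2_eq_square algebra_simps)
qed

lemma P_has_deriv: "((\<lambda>x. P j x v s) has_real_derivative deriv (\<lambda>x. P j x v s) x) (at x)"
proof -
  obtain p where "(\<lambda>x. P j x v s) = poly p" using P_eq_poly by blast
  then show ?thesis by (metis DERIV_imp_deriv poly_DERIV)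
qed

lemma higher_deriv_G:
  "\<forall>x. x\<^sup>2 + v\<^sup>2 > 0 \<longrightarrow> (deriv ^^ j) (\<lambda>x. G x v s) x = (x\<^sup>2 + v\<^sup>2) powr (- s - real j) * P j x v s"
proof (induction j)
  case 0
  show ?case by (simp add: G_def)
next
  case (Suc j)
  let ?S = "{x::real. x\<^sup>2 + v\<^sup>2 > 0}"
  have "open ?S"
    by (rule open_Collect_less) (auto intro!: continuous_intros)
  show ?case
  proof (intro allI impI)
    fix x :: real
    assume r: "x\<^sup>2 + v\<^sup>2 > 0"
    define R where "R = (x\<^sup>2 + v\<^sup>2) powr (- s - real j - 1)"
    have "((\<lambda>y. (y\<^sup>2 + v\<^sup>2) powr (- s - real j) * P j y v s) has_real_derivative
        (- s - real j) * R * (2 * x) * P j x v s + (x\<^sup>2 + v\<^sup>2) powr (- s - real j) * deriv (\<lambda>x. P j x v s) x)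
        (at x)"
      unfolding R_def
      by (rule derivative_eq_intros DERIV_fun_powr P_has_deriv refl | use r in simp)+
    then have "((deriv ^^ j) (\<lambda>x. G x v s) has_real_derivative
        (- s - real j) * R * (2 * x) * P j x v s + (x\<^sup>2 + v\<^sup>2) powr (- s - real j) * deriv (\<lambda>x. P j x v s) x)
        (at x)"
      by (rule has_field_derivative_transform_within_open[OF _ \<open>open ?S\<close>]) (use r Suc in auto)
    moreover have "(x\<^sup>2 + v\<^sup>2) powr (- s - real j) = (x\<^sup>2 + v\<^sup>2) * R"
      using r by (simp add: R_def powr_diff)
    ultimately have "(deriv ^^ Suc j) (\<lambda>x. G x v s) x = R * P (Suc j) x v s"
      by (simp add: DERIV_imp_deriv P_Suc algebra_simps)
    then show "(deriv ^^ Suc j) (\<lambda>x. G x v s) x = (x\<^sup>2 + v\<^sup>2) powr (- s - real (Suc j)) * P (Suc j) x v s"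
      by (simp add: R_def algebra_simps)
  qed
qed

lemma D1G_div_G:
  assumes "u\<^sup>2 + v\<^sup>2 > 0"
  shows "D1G j u v s / G u v s = P j u v s / (u\<^sup>2 + v\<^sup>2) ^ j"
proof -
  have "D1G j u v s = (u\<^sup>2 + v\<^sup>2) powr (- s) / (u\<^sup>2 + v\<^sup>2) ^ j * P j u v s"
    using higher_deriv_G assms by (simp add: D1G_def powr_diff powr_realpow)
  moreover have "G u v s > 0"
    unfolding G_def using assms by auto
  ultimately show ?thesis
    by (simp add: G_def)
qed

lemma P_1: "P 1 u v s = - 2 * s * u"
  by simp

lemma P_2: "P 2 u v s = (4 * s\<^sup>2 + 2 * s) * u\<^sup>2 - 2 * s * v\<^sup>2"
proof -
  have "deriv (\<lambda>x. P 1 x v s) u = - 2 * s"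
    unfolding P_1 by (rule DERIV_imp_deriv) (auto intro!: derivative_eq_intros)
  from P_Suc[of 1 u v s, unfolded Suc_1 this] show ?thesis
    by (simp add: power2_eq_square algebra_simps)
qed

lemma P_3: "P 3 u v s = u * (12 * s * (s + 1) * v\<^sup>2 - 2 * s * (2 * s + 1) * (2 * s + 2) * u\<^sup>2)"
proof -
  have "deriv (\<lambda>x. P 2 x v s) u = 2 * (4 * s\<^sup>2 + 2 * s) * u"
    unfolding P_2 by (rule DERIV_imp_deriv) (auto intro!: derivative_eq_intros)
  from P_Suc[of 2 u v s, unfolded Suc_numeral semiring_norm this] show ?thesis
    by (simp add: P_2 power2_eq_square ring_distribs)
qed

lemma P_4:
  "P 4 u v s = 2 * s * (2 * s + 1) * (2 * s + 2) * (2 * s + 3) * (u\<^sup>2)\<^sup>2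
     - 24 * s * (s + 1) * (2 * s + 3) * u\<^sup>2 * v\<^sup>2 + 12 * s * (s + 1) * (v\<^sup>2)\<^sup>2"
proof -
  have "deriv (\<lambda>x. P 3 x v s) u
      = 12 * s * (s + 1) * v\<^sup>2 - 3 * (2 * s * (2 * s + 1) * (2 * s + 2)) * u\<^sup>2"
    unfolding P_3 by (rule DERIV_imp_deriv) (auto intro!: derivative_eq_intros simp: power2_eq_square)
  from P_Suc[of 3 u v s, unfolded Suc_numeral semiring_norm this] show ?thesis
    by (simp add: P_3 power2_eq_square ring_distribs)
qed

lemma AM_GM_sq_mult_le_cube:
  fixes W X :: real
  assumes "0 \<le> W + 2 * X"
  shows "X\<^sup>2 * (3 * W - 2 * X) \<le> W ^ 3"
proof -
  have "W ^ 3 - X\<^sup>2 * (3 * W - 2 * X) = (W - X)\<^sup>2 * (W + 2 * X)"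
    by (simp add: power2_eq_square power3_eq_cube algebra_simps)
  moreover have "0 \<le> (W - X)\<^sup>2 * (W + 2 * X)"
    using assms by simp
  ultimately show ?thesis
    by linarith
qed

context
  fixes s U Y :: real
  assumes s: "0 < s" and U: "0 < U" and Y: "0 \<le> Y"
begin

lemma quotient2_lower_ineq:
  "- s * (U + Y)\<^sup>2 \<le> 4 * U * (s + 1) * ((4 * s\<^sup>2 + 2 * s) * U - 2 * s * Y)"
proof -
  have "4 * U * (s + 1) * ((4 * s\<^sup>2 + 2 * s) * U - 2 * s * Y) + s * (U + Y)\<^sup>2
      = s * (Y - (4 * s + 3) * U)\<^sup>2"
    by (simp add: power2_eq_square algebra_simps)
  moreover have "0 \<le> s * (Y - (4 * s + 3) * U)\<^sup>2"
    using s by simp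
  ultimately show ?thesis
    by linarith
qed

lemma quotient3_upper_ineq:
  "U\<^sup>2 * (12 * s * (s + 1) * Y - 2 * s * (2 * s + 1) * (2 * s + 2) * U) * (s + 2)\<^sup>2
     \<le> 2 * s * (2 * s + 2) * (U + Y) ^ 3"
proof -
  have "((s + 2) * U)\<^sup>2 * (3 * (U + Y) - 2 * ((s + 2) * U)) \<le> (U + Y) ^ 3"
    using s U Y by (intro AM_GM_sq_mult_le_cube) simp
  then have "4 * s * (s + 1) * (((s + 2) * U)\<^sup>2 * (3 * (U + Y) - 2 * ((s + 2) * U)))
      \<le> 4 * s * (s + 1) * (U + Y) ^ 3"
    using s by (intro mult_left_mono) auto
  then show ?thesis
    by (simp add: power2_eq_square power3_eq_cube algebra_simps)
qed

lemma quotient4_upper_ineq: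
  "(2 * s * (2 * s + 1) * (2 * s + 2) * (2 * s + 3) * U\<^sup>2 - 24 * s * (s + 1) * (2 * s + 3) * U * Y
     + 12 * s * (s + 1) * Y\<^sup>2) * U\<^sup>2 \<le> 2 * s * (2 * s + 1) * (2 * s + 2) * (2 * s + 3) * (U + Y) ^ 4"
proof -
  define A where "A = 2 * s * (2 * s + 1) * (2 * s + 2) * (2 * s + 3)"
  have "12 * s * (s + 1) * 1 \<le> 12 * s * (s + 1) * ((2 * s + 1) * (2 * s + 3))"
    using s by (intro mult_left_mono) (auto simp: algebra_simps)
  then have "12 * s * (s + 1) * (Y\<^sup>2 * U\<^sup>2) \<le> 6 * A * (Y\<^sup>2 * U\<^sup>2)"
    using s unfolding A_def by (intro mult_right_mono) (auto simp: algebra_simps)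
  moreover have "(U + Y) ^ 4 = U ^ 4 + 4 * U ^ 3 * Y + 6 * U\<^sup>2 * Y\<^sup>2 + 4 * U * Y ^ 3 + Y ^ 4"
    by (simp add: power2_eq_square power3_eq_cube power4_eq_xxxx algebra_simps)
  moreover have "0 \<le> A * (4 * U ^ 3 * Y + 4 * U * Y ^ 3 + Y ^ 4)"
    using s U Y by (simp add: A_def)
  moreover have "0 \<le> 24 * s * (s + 1) * (2 * s + 3) * U * Y * U\<^sup>2"
    using s U Y by simp
  ultimately show ?thesis
    unfolding A_def[symmetric] by (simp add: power2_eq_square power3_eq_cube power4_eq_xxxx algebra_simps)
qed

lemma quotient4_lower_ineq:
  "0 \<le> (2 * s * (2 * s + 1) * (2 * s + 2) * (2 * s + 3) * U\<^sup>2 - 24 * s * (s + 1) * (2 * s + 3) * U * Y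
     + 12 * s * (s + 1) * Y\<^sup>2) * U\<^sup>2 + 2 * s * (s + 1) * (2 * s + 2) * 3 * (U + Y) ^ 4"
proof -
  define Q where "Q = (2 * s + 1) * (2 * s + 3) * U\<^sup>2 - 6 * (2 * s + 3) * U * Y + 3 * Y\<^sup>2
    + 3 * (s + 1) * (U\<^sup>2 + 4 * U * Y + 6 * Y\<^sup>2)"
  define c where "c = 21 + 18 * s"
  define K where "K = (2 * s + 1) * (2 * s + 3) + 3 * (s + 1)"
  have "9 \<le> c * K"
    using s mult_nonneg_nonneg[of s s] by (simp add: c_def K_def algebra_simps)
  moreover have "c * Q = (c * Y - 3 * U)\<^sup>2 + U\<^sup>2 * (c * K - 9)"
    by (simp add: Q_def c_def K_def power2_eq_square algebra_simps)
  ultimately have "0 \<le> c * Q"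
    by simp
  then have "0 \<le> Q"
    using s by (simp add: c_def zero_le_mult_iff)
  moreover have "0 \<le> 4 * U * Y ^ 3 + Y ^ 4"
    using U Y by simp
  ultimately have "0 \<le> 4 * s * (s + 1) * U\<^sup>2 * Q + 4 * s * (s + 1) * 3 * (s + 1) * (4 * U * Y ^ 3 + Y ^ 4)"
    using s U by simp
  also have "\<dots> = (2 * s * (2 * s + 1) * (2 * s + 2) * (2 * s + 3) * U\<^sup>2
      - 24 * s * (s + 1) * (2 * s + 3) * U * Y + 12 * s * (s + 1) * Y\<^sup>2) * U\<^sup>2
      + 2 * s * (s + 1) * (2 * s + 2) * 3 * (U + Y) ^ 4"
    by (simp add: Q_def power2_eq_square power3_eq_cube power4_eq_xxxx algebra_simps)
  finally show ?thesis .
qed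

end

lemma D1G_div_G_pos_u:
  assumes "0 < u"
  shows "D1G j u v s / G u v s = P j u v s / (u\<^sup>2 + v\<^sup>2) ^ j"
  using assms by (intro D1G_div_G) (simp add: add_pos_nonneg)

context
  fixes \<gamma> s u v :: real
  assumes \<gamma>: "0 < \<gamma>" and s: "0 < s" and \<gamma>u: "\<gamma> \<le> u"
begin

lemma D1G_1_div_G_bounds:
  "- 2 * s / \<gamma> \<le> D1G 1 u v s / G u v s" "D1G 1 u v s / G u v s < 0"
proof -
  have u: "0 < u" "0 < u\<^sup>2 + v\<^sup>2"
    using \<gamma> \<gamma>u by (auto simp: add_pos_nonneg)
  have R: "D1G 1 u v s / G u v s = - 2 * s * u / (u\<^sup>2 + v\<^sup>2)"
    using D1G_div_G_pos_u[OF u(1), of 1] by simp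
  have "u * \<gamma> \<le> u\<^sup>2 + v\<^sup>2"
    using u \<gamma>u mult_left_mono[OF \<gamma>u, of u] by (simp add: power2_eq_square add_increasing2)
  then show "- 2 * s / \<gamma> \<le> D1G 1 u v s / G u v s"
    unfolding R using s \<gamma> u by (simp add: divide_simps)
  show "D1G 1 u v s / G u v s < 0"
    unfolding R using s u by (simp add: divide_simps)
qed

lemma D1G_2_div_G_bounds:
  "- s / (4 * \<gamma>\<^sup>2 * (s + 1)) \<le> D1G 2 u v s / G u v s"
  "D1G 2 u v s / G u v s \<le> 2 * s * (2 * s + 1) / \<gamma>\<^sup>2"
proof -
  define U Y where "U = u\<^sup>2" and "Y = v\<^sup>2"
  have U: "0 < U" "\<gamma>\<^sup>2 \<le> U" and Y: "0 \<le> Y"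
    using \<gamma> \<gamma>u by (auto simp: U_def Y_def power_mono)
  define N where "N = (4 * s\<^sup>2 + 2 * s) * U - 2 * s * Y"
  have R: "D1G 2 u v s / G u v s = N / (U + Y)\<^sup>2"
    using D1G_div_G_pos_u[of u 2 v s] \<gamma> \<gamma>u by (simp add: P_2 N_def U_def Y_def)
  have "- s / (4 * \<gamma>\<^sup>2 * (s + 1)) \<le> - s / (4 * U * (s + 1))"
    using s \<gamma> U by (simp add: divide_simps mult_left_mono)
  also have "\<dots> \<le> N / (U + Y)\<^sup>2"
    using quotient2_lower_ineq[OF s U(1) Y] s U Y by (simp add: N_def divide_simps mult.commute)
  finally show "- s / (4 * \<gamma>\<^sup>2 * (s + 1)) \<le> D1G 2 u v s / G u v s"
    unfolding R .
  have "N * U \<le> (4 * s\<^sup>2 + 2 * s) * U\<^sup>2"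
    using s U Y by (simp add: N_def power2_eq_square algebra_simps)
  also have "\<dots> \<le> (4 * s\<^sup>2 + 2 * s) * (U + Y)\<^sup>2"
    using s U Y by (intro mult_left_mono power_mono) auto
  finally have "N / (U + Y)\<^sup>2 \<le> (4 * s\<^sup>2 + 2 * s) / U"
    using U Y by (simp add: divide_simps)
  also have "\<dots> \<le> (4 * s\<^sup>2 + 2 * s) / \<gamma>\<^sup>2"
    using s \<gamma> U by (intro divide_left_mono) auto
  finally show "D1G 2 u v s / G u v s \<le> 2 * s * (2 * s + 1) / \<gamma>\<^sup>2"
    unfolding R by (simp add: power2_eq_square algebra_simps)
qed

lemma D1G_3_div_G_bounds:
  "- 2 * s * (2 * s + 1) * (2 * s + 2) / \<gamma> ^ 3 \<le> D1G 3 u v s / G u v s"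
  "D1G 3 u v s / G u v s \<le> 2 * s * (2 * s + 2) / (\<gamma> ^ 3 * (s + 2)\<^sup>2)"
proof -
  define U Y where "U = u\<^sup>2" and "Y = v\<^sup>2"
  define a where "a = 2 * s * (2 * s + 1) * (2 * s + 2)"
  have u: "0 < u" "\<gamma> ^ 3 \<le> u ^ 3" and U: "0 < U" and Y: "0 \<le> Y" and a: "0 < a"
    using \<gamma> \<gamma>u s by (auto simp: U_def Y_def a_def power_mono)
  have U3: "U ^ 3 = u ^ 3 * u ^ 3"
    by (simp add: U_def power2_eq_square power3_eq_cube)
  have R: "D1G 3 u v s / G u v s = u * (12 * s * (s + 1) * Y - a * U) / (U + Y) ^ 3"
    using D1G_div_G_pos_u[OF u(1), of 3 v s] by (simp add: P_3 a_def U_def Y_def)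
  have "- a / \<gamma> ^ 3 \<le> - a / u ^ 3"
    using \<gamma> u a by (simp add: divide_simps mult_left_mono)
  also have "\<dots> \<le> - a * u ^ 3 / (U + Y) ^ 3"
  proof -
    have "u ^ 3 * u ^ 3 \<le> (U + Y) ^ 3"
      unfolding U3[symmetric] using U Y by (intro power_mono) auto
    then have "a * (u ^ 3 * u ^ 3) \<le> a * (U + Y) ^ 3"
      using a by (intro mult_left_mono) auto
    then show ?thesis
      using u U Y by (simp add: divide_simps mult.assoc)
  qed
  also have "\<dots> \<le> u * (12 * s * (s + 1) * Y - a * U) / (U + Y) ^ 3"
  proof (rule divide_right_mono)
    have "0 \<le> u * (12 * s * (s + 1) * Y)"
      using u s Y by simp
    then show "- a * u ^ 3 \<le> u * (12 * s * (s + 1) * Y - a * U)"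
      by (simp add: U_def power2_eq_square power3_eq_cube algebra_simps)
  qed (use U Y in simp)
  finally show "- 2 * s * (2 * s + 1) * (2 * s + 2) / \<gamma> ^ 3 \<le> D1G 3 u v s / G u v s"
    unfolding R a_def by simp
  have "U\<^sup>2 * (12 * s * (s + 1) * Y - a * U) * (s + 2)\<^sup>2 \<le> 2 * s * (2 * s + 2) * (U + Y) ^ 3"
    using quotient3_upper_ineq[OF s U Y] by (simp add: a_def)
  moreover have "U\<^sup>2 = u * u ^ 3"
    by (simp add: U_def power2_eq_square power3_eq_cube)
  ultimately have "u * (12 * s * (s + 1) * Y - a * U) * (u ^ 3 * (s + 2)\<^sup>2)
      \<le> 2 * s * (2 * s + 2) * (U + Y) ^ 3"
    by (simp add: algebra_simps)
  then have "u * (12 * s * (s + 1) * Y - a * U) / (U + Y) ^ 3 \<le> 2 * s * (2 * s + 2) / (u ^ 3 * (s + 2)\<^sup>2)"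
    using u U Y s by (simp add: divide_simps)
  also have "\<dots> \<le> 2 * s * (2 * s + 2) / (\<gamma> ^ 3 * (s + 2)\<^sup>2)"
    using \<gamma> s u by (intro divide_left_mono mult_right_mono mult_pos_pos) auto
  finally show "D1G 3 u v s / G u v s \<le> 2 * s * (2 * s + 2) / (\<gamma> ^ 3 * (s + 2)\<^sup>2)"
    unfolding R .
qed

lemma D1G_4_div_G_bounds:
  "- 2 * s * (s + 1) * (2 * s + 2) * 3 / \<gamma> ^ 4 \<le> D1G 4 u v s / G u v s"
  "D1G 4 u v s / G u v s \<le> 2 * s * (2 * s + 1) * (2 * s + 2) * (2 * s + 3) / \<gamma> ^ 4"
proof -
  define U Y where "U = u\<^sup>2" and "Y = v\<^sup>2"
  define L A where "L = 2 * s * (s + 1) * (2 * s + 2) * 3"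
    and "A = 2 * s * (2 * s + 1) * (2 * s + 2) * (2 * s + 3)"
  have u: "0 < u" and U: "0 < U" "\<gamma> ^ 4 \<le> U\<^sup>2" and Y: "0 \<le> Y" and LA: "0 < L" "0 < A"
    using \<gamma> \<gamma>u s by (auto simp: U_def Y_def L_def A_def power_mono simp flip: power_mult)
  define N where "N = A * U\<^sup>2 - 24 * s * (s + 1) * (2 * s + 3) * U * Y + 12 * s * (s + 1) * Y\<^sup>2"
  have R: "D1G 4 u v s / G u v s = N / (U + Y) ^ 4"
    using D1G_div_G_pos_u[OF u, of 4 v s] by (simp add: P_4 N_def A_def U_def Y_def)
  have "- L / \<gamma> ^ 4 \<le> - L / U\<^sup>2"
    using \<gamma> U LA by (simp add: divide_simps mult_left_mono)
  also have "\<dots> \<le> N / (U + Y) ^ 4"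
    using quotient4_lower_ineq[OF s U(1) Y] U Y
    by (simp add: divide_simps N_def L_def A_def algebra_simps)
  finally show "- 2 * s * (s + 1) * (2 * s + 2) * 3 / \<gamma> ^ 4 \<le> D1G 4 u v s / G u v s"
    unfolding R L_def by simp
  have "N / (U + Y) ^ 4 \<le> A / U\<^sup>2"
    using quotient4_upper_ineq[OF s U(1) Y] U Y
    by (simp add: divide_simps N_def A_def algebra_simps)
  also have "\<dots> \<le> A / \<gamma> ^ 4"
    using \<gamma> U LA by (intro divide_left_mono) auto
  finally show "D1G 4 u v s / G u v s \<le> 2 * s * (2 * s + 1) * (2 * s + 2) * (2 * s + 3) / \<gamma> ^ 4"
    unfolding R A_def .
qed

end

theorem lemma5p6:
  fixes \<gamma> s u v :: real
  assumes "\<gamma> > 0" and "s > 0" and "u \<ge> \<gamma>"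
  shows "(\<forall>j\<ge>1. D1G j u v s / G u v s = P j u v s / (u\<^sup>2 + v\<^sup>2) ^ j)
    \<and> - 2 * s / \<gamma> \<le> D1G 1 u v s / G u v s \<and> D1G 1 u v s / G u v s < 0
    \<and> - s / (4 * \<gamma>\<^sup>2 * (s + 1)) \<le> D1G 2 u v s / G u v s
    \<and> D1G 2 u v s / G u v s \<le> 2 * s * (2 * s + 1) / \<gamma>\<^sup>2
    \<and> - 2 * s * (2 * s + 1) * (2 * s + 2) / \<gamma> ^ 3 \<le> D1G 3 u v s / G u v s
    \<and> D1G 3 u v s / G u v s \<le> 2 * s * (2 * s + 2) / (\<gamma> ^ 3 * (s + 2)\<^sup>2)
    \<and> - 2 * s * (s + 1) * (2 * s + 2) * 3 / \<gamma> ^ 4 \<le> D1G 4 u v s / G u v s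
    \<and> D1G 4 u v s / G u v s \<le> 2 * s * (2 * s + 1) * (2 * s + 2) * (2 * s + 3) / \<gamma> ^ 4"
  using D1G_div_G_pos_u[of u] D1G_1_div_G_bounds[OF assms] D1G_2_div_G_bounds[OF assms]
    D1G_3_div_G_bounds[OF assms] D1G_4_div_G_bounds[OF assms] assms
  by auto

end
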